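(* Let $T\in\mathrm{Aut}(X,\mu)$ be an aperiodic transformation with infinite dynamical entropy and let $U\in[T]$ be such that the $T$-cocycle of $U$ has finite Shannon entropy. Then $U$ has infinite dynamical entropy. Consequently, if two aperiodic transformations are Shannon orbit equivalent, one has finite dynamical entropy if and only if the other does.
   Context: $(X,\mu)$ is a standard atomless probability space, $\mathrm{Aut}(X,\mu)$ its group of measure-preserving transformations modulo null sets. For aperiodic $T$, $[T]$ is the set of $U\in\mathrm{Aut}(X,\mu)$ with $U(x)=T^{c_U(x)}(x)$ for a (unique) measurable $c_U:X\to\mathbb Z$, the $T$-cocycle. The Shannon entropy of measurable $f:X\to I$, $I$ countable, is $H(f)=-\sum_i\mu(f^{-1}\{i\})\log\mu(f^{-1}\{i\})$. A measurable $f:X\to I$ ($I$ countable) is $T$-dynamically generating if there is a conull $X_0$ such that for all distinct $x,y\in X_0$ there is $n\in\mathbb Z$ with $f(T^nx)\ne f(T^ny)$. The dynamical entropy of $T$ is the infimum of $H(f)$ over $T$-dynamically generating $f$. Shannon orbit equivalence of aperiodic $T_1,T_2$: there is $S\in\mathrm{Aut}(X,\mu)$ with $ST_1S^{-1}$, $T_2$ having the same orbits and both cocycles ($T_2$-cocycle of $ST_1S^{-1}$, $ST_1S^{-1}$-cocycle of $T_2$) of finite Shannon entropy. *)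

theory Defs
  imports "HOL-Analysis.Analysis"
begin

text \<open>The standard atomless probability space: [0,1] with (Borel) Lebesgue measure.\<close>
definition stdX :: "real measure" where
  "stdX = restrict_space lborel {0..1}"

text \<open>Elements of Aut(X,mu), represented by measurable maps; invertible modulo null sets.\<close>
definition aut :: "'a measure \<Rightarrow> ('a \<Rightarrow> 'a) \<Rightarrow> bool" where
  "aut M T \<longleftrightarrow> T \<in> M \<rightarrow>\<^sub>M M \<and> distr M M T = M \<and>
     (\<exists>S \<in> M \<rightarrow>\<^sub>M M. distr M M S = M \<and> (AE x in M. S (T x) = x) \<and> (AE x in M. T (S x) = x))"

definition aut_inv :: "'a measure \<Rightarrow> ('a \<Rightarrow> 'a) \<Rightarrow> ('a \<Rightarrow> 'a)" where
  "aut_inv M T = (SOME S. S \<in> M \<rightarrow>\<^sub>M M \<and> distr M M S = M \<and>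
       (AE x in M. S (T x) = x) \<and> (AE x in M. T (S x) = x))"

definition tpow :: "'a measure \<Rightarrow> ('a \<Rightarrow> 'a) \<Rightarrow> int \<Rightarrow> 'a \<Rightarrow> 'a" where
  "tpow M T k x = (if 0 \<le> k then (T ^^ nat k) x else (aut_inv M T ^^ nat (- k)) x)"

definition aperiodic :: "'a measure \<Rightarrow> ('a \<Rightarrow> 'a) \<Rightarrow> bool" where
  "aperiodic M T \<longleftrightarrow> aut M T \<and> (AE x in M. \<forall>n::nat. 0 < n \<longrightarrow> (T ^^ n) x \<noteq> x)"

definition full_group_cocycle :: "'a measure \<Rightarrow> ('a \<Rightarrow> 'a) \<Rightarrow> ('a \<Rightarrow> 'a) \<Rightarrow> ('a \<Rightarrow> int) \<Rightarrow> bool" where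
  "full_group_cocycle M T U c \<longleftrightarrow> aut M U \<and> c \<in> M \<rightarrow>\<^sub>M count_space UNIV \<and>
     (AE x in M. U x = tpow M T (c x) x)"

definition shannon_entropy :: "'a measure \<Rightarrow> ('a \<Rightarrow> 'b) \<Rightarrow> ennreal" where
  "shannon_entropy M f = (\<integral>\<^sup>+ i. ennreal (- measure M (f -` {i} \<inter> space M)
        * ln (measure M (f -` {i} \<inter> space M))) \<partial>count_space UNIV)"

definition dyn_generating :: "'a measure \<Rightarrow> ('a \<Rightarrow> 'a) \<Rightarrow> ('a \<Rightarrow> 'b) \<Rightarrow> bool" where
  "dyn_generating M T f \<longleftrightarrow> (\<exists>X0 \<in> sets M. emeasure M (space M - X0) = 0 \<and>
     (\<forall>x\<in>X0. \<forall>y\<in>X0. x \<noteq> y \<longrightarrow> (\<exists>n::int. f (tpow M T n x) \<noteq> f (tpow M T n y))))"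

text \<open>Dynamical entropy; countable label sets are represented by nat (w.l.o.g.).\<close>
definition dyn_entropy :: "'a measure \<Rightarrow> ('a \<Rightarrow> 'a) \<Rightarrow> ennreal" where
  "dyn_entropy M T = (INF f \<in> {f :: 'a \<Rightarrow> nat. f \<in> M \<rightarrow>\<^sub>M count_space UNIV \<and> dyn_generating M T f}.
       shannon_entropy M f)"

definition shannon_oe :: "'a measure \<Rightarrow> ('a \<Rightarrow> 'a) \<Rightarrow> ('a \<Rightarrow> 'a) \<Rightarrow> bool" where
  "shannon_oe M T1 T2 \<longleftrightarrow> (\<exists>S. aut M S \<and>
     (let T1' = S \<circ> T1 \<circ> aut_inv M S in
       (\<exists>c. full_group_cocycle M T2 T1' c \<and> shannon_entropy M c < \<infinity>) \<and>
       (\<exists>d. full_group_cocycle M T1' T2 d \<and> shannon_entropy M d < \<infinity>)))"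

end

theory Submission
  imports Defs "HOL-Probability.Probability_Measure"
begin

text \<open>
If \<open>f\<close> is a \<open>U\<close>-generator and \<open>c\<close> the \<open>T\<close>-cocycle of \<open>U \<in> [T]\<close>, then the pair \<open>(f, c)\<close>
is a \<open>T\<close>-generator: the values of \<open>c\<close> along the \<open>T\<close>-orbit of \<open>x\<close> tell where \<open>U\<close> moves
along that orbit, so the \<open>(f, c)\<close>-names of \<open>x\<close> determine its \<open>f\<close>-names under \<open>U\<close>.
Since \<open>H(f, c) \<le> H(f) + H(c) + 1\<close>, finite dynamical entropy passes from \<open>U\<close> to \<open>T\<close>.
A measure-preserving conjugacy carries generators to generators of the same entropy, so for
a Shannon orbit equivalence, realised by \<open>S T\<^sub>1 S\<inverse> \<in> [T\<^sub>2]\<close> and \<open>T\<^sub>2 \<in> [S T\<^sub>1 S\<inverse>]\<close>, both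
directions follow.
\<close>

section \<open>Measure-preserving maps and invariant conull sets\<close>

definition measure_preserving :: "'a measure \<Rightarrow> ('a \<Rightarrow> 'a) \<Rightarrow> bool" where
  "measure_preserving M g \<longleftrightarrow> g \<in> M \<rightarrow>\<^sub>M M \<and> distr M M g = M"

lemma AE_measure_preserving:
  assumes "measure_preserving M g" "AE x in M. P x"
  shows "AE x in M. P (g x)"
proof -
  have g: "g \<in> M \<rightarrow>\<^sub>M M" and "distr M M g = M"
    using assms(1) by (auto simp: measure_preserving_def)
  have "AE x in distr M M g. P x"
    unfolding \<open>distr M M g = M\<close> by (rule assms(2))
  then show ?thesis
    by (rule AE_distrD[OF g])
qed

lemma AE_in_conull_set:
  assumes "X \<in> sets M" "emeasure M (space M - X) = 0"
  shows "AE x in M. x \<in> X"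
  using assms by (intro AE_I[of _ _ "space M - X"]) auto

lemma measure_preserving_comp:
  assumes "measure_preserving M g" "measure_preserving M h"
  shows "measure_preserving M (g \<circ> h)"
proof -
  have "distr M M (g \<circ> h) = distr (distr M M h) M g"
    using assms unfolding measure_preserving_def by (metis distr_distr)
  then show ?thesis
    using assms by (auto simp: measure_preserving_def measurable_comp)
qed

(* A word [g\<^sub>1, \<dots>, g\<^sub>n] acts as foldr id [g\<^sub>1, \<dots>, g\<^sub>n] = g\<^sub>1 \<circ> \<dots> \<circ> g\<^sub>n. *)
lemma measure_preserving_word:
  assumes "\<And>g. g \<in> F \<Longrightarrow> measure_preserving M g" "w \<in> lists F"
  shows "measure_preserving M (foldr id w)"
  using assms(2)
proof (induction w)
  case Nil
  then show ?case by (simp add: measure_preserving_def id_def)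
next
  case (Cons g w)
  then show ?case
    using measure_preserving_comp[OF assms(1)] by (simp add: comp_def)
qed

lemma conull_invariant_set:
  assumes F: "countable F" "\<And>g. g \<in> F \<Longrightarrow> measure_preserving M g"
    and P: "AE x in M. P x"
  obtains G where "G \<in> sets M" "emeasure M (space M - G) = 0" "\<And>x. x \<in> G \<Longrightarrow> P x"
    "\<And>g x. g \<in> F \<Longrightarrow> x \<in> G \<Longrightarrow> g x \<in> G"
proof -
  obtain N where "{x \<in> space M. \<not> P x} \<subseteq> N" "emeasure M N = 0" "N \<in> sets M"
    using AE_E[OF P] by blast
  then have N: "{x \<in> space M. \<not> P x} \<subseteq> N" "N \<in> null_sets M"
    by (auto intro: null_setsI)
  \<comment> \<open>the points whose whole forward orbit under the semigroup generated by \<open>F\<close> avoids \<open>N\<close>\<close>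
  define G where "G = (\<Inter>w\<in>lists F. foldr id w -` (space M - N) \<inter> space M)"
  have word: "measure_preserving M (foldr id w)" if "w \<in> lists F" for w
    using measure_preserving_word[OF F(2) that] .
  have "G \<in> sets M"
    unfolding G_def using F(1) N(2) word
    by (intro sets.countable_INT') (auto intro!: measurable_sets simp: measure_preserving_def)
  moreover have "emeasure M (space M - G) = 0"
  proof -
    have "AE x in M. x \<in> space M - N"
      using AE_not_in[OF N(2)] by (auto elim: eventually_mono)
    then have "AE x in M. foldr id w x \<in> space M - N" if "w \<in> lists F" for w
      by (rule AE_measure_preserving[OF word[OF that]])
    then have "AE x in M. \<forall>w\<in>lists F. foldr id w x \<in> space M - N"
      using F(1) by (simp add: AE_ball_countable)
    then have "emeasure M {x \<in> space M. \<not> (\<forall>w\<in>lists F. foldr id w x \<in> space M - N)} = 0"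
      by (rule AE_E2)
    moreover have "space M - G = {x \<in> space M. \<not> (\<forall>w\<in>lists F. foldr id w x \<in> space M - N)}"
      by (auto simp: G_def)
    ultimately show ?thesis
      by simp
  qed
  moreover have "P x" if "x \<in> G" for x
    using INT_D[OF that[unfolded G_def], of "[]"] N(1) by auto
  moreover have "g x \<in> G" if "g \<in> F" "x \<in> G" for g x
  proof -
    have "foldr id w (g x) \<in> space M - N" if "w \<in> lists F" for w
      using INT_D[OF \<open>x \<in> G\<close>[unfolded G_def], of "w @ [g]"] \<open>g \<in> F\<close> that by auto
    moreover from this[of "[]"] have "g x \<in> space M"
      by simp
    ultimately show ?thesis
      by (simp add: G_def)
  qed
  ultimately show ?thesis
    using that by blast
qed

section \<open>Automorphisms and their integer powers\<close>

lemma aut_inv: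
  assumes "aut M T"
  shows "measure_preserving M (aut_inv M T)"
    "AE x in M. aut_inv M T (T x) = x" "AE x in M. T (aut_inv M T x) = x"
proof -
  let ?P = "\<lambda>S. S \<in> M \<rightarrow>\<^sub>M M \<and> distr M M S = M \<and>
    (AE x in M. S (T x) = x) \<and> (AE x in M. T (S x) = x)"
  obtain S where "?P S"
    using assms unfolding aut_def by blast
  then have "?P (aut_inv M T)"
    unfolding aut_inv_def by (rule someI[where P = ?P])
  then show "measure_preserving M (aut_inv M T)"
    "AE x in M. aut_inv M T (T x) = x" "AE x in M. T (aut_inv M T x) = x"
    by (auto simp: measure_preserving_def)
qed

lemma aut_measure_preserving: "aut M T \<Longrightarrow> measure_preserving M T"
  by (simp add: aut_def measure_preserving_def)

lemma aut_aut_inv: "aut M T \<Longrightarrow> aut M (aut_inv M T)"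
  using aut_inv[of M T] aut_measure_preserving[of M T]
  unfolding aut_def[of M "aut_inv M T"] measure_preserving_def by blast

definition mutually_inverse_on :: "'a set \<Rightarrow> ('a \<Rightarrow> 'a) \<Rightarrow> ('a \<Rightarrow> 'a) \<Rightarrow> bool" where
  "mutually_inverse_on G F F' \<longleftrightarrow> (\<forall>x\<in>G. F x \<in> G \<and> F' x \<in> G \<and> F (F' x) = x \<and> F' (F x) = x)"

lemma mutually_inverse_onD:
  assumes "mutually_inverse_on G F F'" "x \<in> G"
  shows "F x \<in> G" "F' x \<in> G" "F (F' x) = x" "F' (F x) = x"
  using assms by (auto simp: mutually_inverse_on_def)

lemma aut_conull_invariant_set:
  assumes F: "finite F" "\<And>T. T \<in> F \<Longrightarrow> aut M T" and P: "AE x in M. P x"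
  obtains G where "G \<in> sets M" "emeasure M (space M - G) = 0" "\<And>x. x \<in> G \<Longrightarrow> P x"
    "\<And>T. T \<in> F \<Longrightarrow> mutually_inverse_on G T (aut_inv M T)"
proof -
  have "AE x in M. aut_inv M T (T x) = x \<and> T (aut_inv M T x) = x" if "T \<in> F" for T
    using aut_inv(2,3)[OF F(2)[OF that]] by (rule eventually_conj)
  then have AE: "AE x in M. P x \<and> (\<forall>T\<in>F. aut_inv M T (T x) = x \<and> T (aut_inv M T x) = x)"
    by (intro eventually_conj[OF P] eventually_ball_finite[OF F(1)]) blast
  have countable: "countable (F \<union> aut_inv M ` F)"
    using F(1) by (simp add: countable_finite)
  have preserving: "measure_preserving M g" if "g \<in> F \<union> aut_inv M ` F" for g
    using that F(2) aut_inv(1) aut_measure_preserving by blast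
  show ?thesis
  proof (rule conull_invariant_set[OF countable preserving AE])
    fix G
    assume "G \<in> sets M" "emeasure M (space M - G) = 0"
      "\<And>x. x \<in> G \<Longrightarrow> P x \<and> (\<forall>T\<in>F. aut_inv M T (T x) = x \<and> T (aut_inv M T x) = x)"
      "\<And>g x. g \<in> F \<union> aut_inv M ` F \<Longrightarrow> x \<in> G \<Longrightarrow> g x \<in> G"
    then show thesis
      using that by (simp add: mutually_inverse_on_def)
  qed
qed

lemma tpow_0 [simp]: "tpow M T 0 x = x"
  by (simp add: tpow_def)

context
  fixes M :: "'a measure" and G :: "'a set" and T :: "'a \<Rightarrow> 'a"
  assumes inv: "mutually_inverse_on G T (aut_inv M T)"
begin

lemma funpow_closed: "(\<And>x. x \<in> G \<Longrightarrow> F x \<in> G) \<Longrightarrow> x \<in> G \<Longrightarrow> (F ^^ k) x \<in> G"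
  by (induction k) auto

lemma tpow_closed: "x \<in> G \<Longrightarrow> tpow M T n x \<in> G"
  using funpow_closed[of T, OF mutually_inverse_onD(1)[OF inv]]
    funpow_closed[of "aut_inv M T", OF mutually_inverse_onD(2)[OF inv]]
  by (simp add: tpow_def)

lemma tpow_plus1:
  assumes x: "x \<in> G"
  shows "tpow M T (n + 1) x = T (tpow M T n x)"
proof -
  consider "0 \<le> n" | "n = -1" | "n < -1"
    by linarith
  then show ?thesis
  proof cases
    case 1
    then have "nat (n + 1) = Suc (nat n)"
      by simp
    with 1 show ?thesis
      by (simp add: tpow_def)
  next
    case 2
    then show ?thesis
      using mutually_inverse_onD(3)[OF inv x] by (simp add: tpow_def)
  next
    case 3
    define y where "y = (aut_inv M T ^^ nat (- (n + 1))) x"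
    have "nat (- n) = Suc (nat (- (n + 1)))"
      using 3 by simp
    then have "tpow M T n x = aut_inv M T y"
      using 3 by (simp add: tpow_def y_def)
    moreover have "tpow M T (n + 1) x = y"
      using 3 by (simp add: tpow_def y_def)
    moreover have "y \<in> G"
      unfolding y_def using mutually_inverse_onD(2)[OF inv] x by (rule funpow_closed)
    ultimately show ?thesis
      using mutually_inverse_onD(3)[OF inv] by simp
  qed
qed

lemma tpow_minus1:
  assumes "x \<in> G"
  shows "tpow M T (n - 1) x = aut_inv M T (tpow M T n x)"
  using tpow_plus1[OF assms, of "n - 1"] mutually_inverse_onD(4)[OF inv tpow_closed[OF assms]]
  by simp

lemma tpow_add: "x \<in> G \<Longrightarrow> tpow M T (a + b) x = tpow M T a (tpow M T b x)"
proof (induction a rule: int_induct[where k = 0])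
  case (step1 i)
  then show ?case
    using tpow_plus1[of x "i + b"] tpow_plus1[OF tpow_closed[of x b], of i] by (simp add: algebra_simps)
next
  case (step2 i)
  then show ?case
    using tpow_minus1[of x "i + b"] tpow_minus1[OF tpow_closed[of x b], of i] by (simp add: algebra_simps)
qed simp

end

section \<open>Conjugate transformations\<close>

lemma tpow_conjugate:
  assumes T: "mutually_inverse_on G T (aut_inv M T)" and T': "mutually_inverse_on G T' (aut_inv M T')"
    and \<phi>: "\<And>x. x \<in> G \<Longrightarrow> \<phi> x \<in> G" "\<And>x. x \<in> G \<Longrightarrow> \<phi> (T x) = T' (\<phi> x)" and x: "x \<in> G"
  shows "tpow M T' n (\<phi> x) = \<phi> (tpow M T n x)"
proof (induction n rule: int_induct[where k = 0])
  case (step1 i)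
  then show ?case
    using tpow_plus1[OF T' \<phi>(1)[OF x], of i] tpow_plus1[OF T x, of i] \<phi>(2)[OF tpow_closed[OF T x]]
    by simp
next
  case (step2 i)
  define z where "z = tpow M T (i - 1) x"
  have z: "z \<in> G"
    unfolding z_def by (rule tpow_closed[OF T x])
  have "tpow M T i x = T z"
    using tpow_plus1[OF T x, of "i - 1"] by (simp add: z_def)
  then have "tpow M T' (i - 1) (\<phi> x) = aut_inv M T' (T' (\<phi> z))"
    using tpow_minus1[OF T' \<phi>(1)[OF x], of i] step2 \<phi>(2)[OF z] by simp
  also have "\<dots> = \<phi> z"
    by (rule mutually_inverse_onD(4)[OF T' \<phi>(1)[OF z]])
  finally show ?case
    by (simp add: z_def)
qed simp

lemma dyn_generating_conjugate:
  assumes T: "aut M T" and T': "aut M T'" and \<phi>: "aut M \<phi>"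
    and comm: "AE x in M. \<phi> (T x) = T' (\<phi> x)" and gen: "dyn_generating M T' f"
  shows "dyn_generating M T (f \<circ> \<phi>)"
proof -
  obtain X0 where X0: "X0 \<in> sets M" "emeasure M (space M - X0) = 0"
    and sep: "\<And>x y. x \<in> X0 \<Longrightarrow> y \<in> X0 \<Longrightarrow> x \<noteq> y \<Longrightarrow> \<exists>n. f (tpow M T' n x) \<noteq> f (tpow M T' n y)"
    using gen unfolding dyn_generating_def by blast
  have "AE x in M. \<phi> x \<in> X0"
    using AE_in_conull_set[OF X0] by (rule AE_measure_preserving[OF aut_measure_preserving[OF \<phi>]])
  with comm have AE: "AE x in M. \<phi> (T x) = T' (\<phi> x) \<and> \<phi> x \<in> X0"
    by (rule eventually_conj)
  obtain G where G: "G \<in> sets M" "emeasure M (space M - G) = 0"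
    and GP: "\<And>x. x \<in> G \<Longrightarrow> \<phi> (T x) = T' (\<phi> x) \<and> \<phi> x \<in> X0"
    and inv: "\<And>S. S \<in> {T, T', \<phi>} \<Longrightarrow> mutually_inverse_on G S (aut_inv M S)"
    by (rule aut_conull_invariant_set[of "{T, T', \<phi>}", OF _ _ AE]) (use T T' \<phi> in auto)
  have invT: "mutually_inverse_on G T (aut_inv M T)"
    and invT': "mutually_inverse_on G T' (aut_inv M T')"
    and inv\<phi>: "mutually_inverse_on G \<phi> (aut_inv M \<phi>)"
    using inv by auto
  have conj: "tpow M T' n (\<phi> z) = \<phi> (tpow M T n z)" if "z \<in> G" for z n
    by (rule tpow_conjugate[OF invT invT']) (use mutually_inverse_onD(1)[OF inv\<phi>] GP that in auto)
  have "\<exists>n. (f \<circ> \<phi>) (tpow M T n x) \<noteq> (f \<circ> \<phi>) (tpow M T n y)"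
    if x: "x \<in> G" and y: "y \<in> G" and "x \<noteq> y" for x y
  proof -
    have "\<phi> x \<noteq> \<phi> y"
      using \<open>x \<noteq> y\<close> mutually_inverse_onD(4)[OF inv\<phi> x] mutually_inverse_onD(4)[OF inv\<phi> y] by metis
    then obtain n where "f (tpow M T' n (\<phi> x)) \<noteq> f (tpow M T' n (\<phi> y))"
      using sep GP x y by blast
    then show ?thesis
      using conj x y by auto
  qed
  then show ?thesis
    unfolding dyn_generating_def using G by blast
qed

lemma shannon_entropy_measure_preserving_comp:
  assumes \<phi>: "measure_preserving M \<phi>" and f: "f \<in> M \<rightarrow>\<^sub>M count_space UNIV"
  shows "shannon_entropy M (f \<circ> \<phi>) = shannon_entropy M f"
proof -
  have \<phi>_meas: "\<phi> \<in> M \<rightarrow>\<^sub>M M" and \<phi>_distr: "distr M M \<phi> = M"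
    using \<phi> by (auto simp: measure_preserving_def)
  have "measure M ((f \<circ> \<phi>) -` {i} \<inter> space M) = measure M (f -` {i} \<inter> space M)" for i
  proof -
    have "measure M ((f \<circ> \<phi>) -` {i} \<inter> space M) = measure M (\<phi> -` (f -` {i} \<inter> space M) \<inter> space M)"
      using \<phi>_meas by (intro arg_cong[where f = "measure M"]) (auto simp: measurable_def)
    also have "\<dots> = measure (distr M M \<phi>) (f -` {i} \<inter> space M)"
      using \<phi>_meas f by (simp add: measure_distr measurable_sets)
    finally show ?thesis
      unfolding \<phi>_distr .
  qed
  then show ?thesis
    unfolding shannon_entropy_def by simp
qed

lemma dyn_entropy_less_top_iff:
  "dyn_entropy M T < \<infinity> \<longleftrightarrow> (\<exists>f :: 'a \<Rightarrow> nat. f \<in> M \<rightarrow>\<^sub>M count_space UNIV \<and>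
     dyn_generating M T f \<and> shannon_entropy M f < \<infinity>)"
  unfolding dyn_entropy_def INF_less_iff by blast

lemma dyn_entropy_finite_conjugate:
  assumes "aut M T" "aut M T'" and \<phi>: "aut M \<phi>"
    and "AE x in M. \<phi> (T x) = T' (\<phi> x)" and "dyn_entropy M T' < \<infinity>"
  shows "dyn_entropy M T < \<infinity>"
proof -
  obtain f :: "'a \<Rightarrow> nat" where f: "f \<in> M \<rightarrow>\<^sub>M count_space UNIV" "dyn_generating M T' f"
    "shannon_entropy M f < \<infinity>"
    using assms(5) dyn_entropy_less_top_iff by blast
  note \<phi>_preserving = aut_measure_preserving[OF \<phi>]
  have "f \<circ> \<phi> \<in> M \<rightarrow>\<^sub>M count_space UNIV"
    using \<phi>_preserving f(1) by (auto simp: measure_preserving_def)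
  moreover have "dyn_generating M T (f \<circ> \<phi>)"
    using assms(1-4) f(2) by (rule dyn_generating_conjugate)
  moreover have "shannon_entropy M (f \<circ> \<phi>) < \<infinity>"
    using shannon_entropy_measure_preserving_comp[OF \<phi>_preserving f(1)] f(3) by simp
  ultimately show ?thesis
    using dyn_entropy_less_top_iff by blast
qed

section \<open>Generators from a cocycle\<close>

context
  fixes M :: "'a measure" and G :: "'a set" and T U :: "'a \<Rightarrow> 'a" and c :: "'a \<Rightarrow> int"
  assumes T: "mutually_inverse_on G T (aut_inv M T)"
    and U: "mutually_inverse_on G U (aut_inv M U)"
    and cocycle: "\<And>z. z \<in> G \<Longrightarrow> U z = tpow M T (c z) z"
begin

lemma aut_inv_cocycle:
  assumes x: "x \<in> G"
  shows "aut_inv M U x = tpow M T (- c (aut_inv M U x)) x"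
proof -
  define z where "z = aut_inv M U x"
  have z: "z \<in> G"
    unfolding z_def by (rule mutually_inverse_onD(2)[OF U x])
  have x_eq: "x = tpow M T (c z) z"
    using cocycle[OF z] mutually_inverse_onD(3)[OF U x] by (simp add: z_def)
  have "tpow M T (- c z) x = tpow M T (- c z + c z) z"
    unfolding x_eq by (rule tpow_add[OF T z, symmetric])
  then show ?thesis
    by (simp add: z_def)
qed

lemma cocycle_powers_synchronised:
  assumes x: "x \<in> G" and y: "y \<in> G"
    and same: "\<And>n. c (tpow M T n x) = c (tpow M T n y)"
  shows "\<exists>m. tpow M U k x = tpow M T m x \<and> tpow M U k y = tpow M T m y"
proof (induction k rule: int_induct[where k = 0])
  case base
  show ?case
    by (rule exI[of _ 0]) simp
next
  case (step1 k)
  then obtain m where m: "tpow M U k x = tpow M T m x" "tpow M U k y = tpow M T m y"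
    by blast
  define d where "d = c (tpow M T m x)"
  have "tpow M U (k + 1) z = tpow M T (d + m) z" if "z \<in> G" "tpow M U k z = tpow M T m z"
    and "c (tpow M T m z) = d" for z
    using that tpow_plus1[OF U \<open>z \<in> G\<close>, of k] cocycle[OF tpow_closed[OF T \<open>z \<in> G\<close>]]
      tpow_add[OF T \<open>z \<in> G\<close>, of d m] by simp
  then show ?case
    using x y m same[of m] by (auto simp: d_def)
next
  case (step2 k)
  then obtain m where m: "tpow M U k x = tpow M T m x" "tpow M U k y = tpow M T m y"
    by blast
  define d where "d = c (aut_inv M U (tpow M T m x))"
  have "aut_inv M U (tpow M T m x) = tpow M T (- d) (tpow M T m x)"
    unfolding d_def by (rule aut_inv_cocycle[OF tpow_closed[OF T x]])
  also have "\<dots> = tpow M T (m - d) x"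
    using tpow_add[OF T x, of "- d" m] by simp
  finally have x': "aut_inv M U (tpow M T m x) = tpow M T (m - d) x" .
  define w where "w = tpow M T (m - d) y"
  have w: "w \<in> G"
    unfolding w_def by (rule tpow_closed[OF T y])
  have "c w = d"
    using same[of "m - d"] x' d_def unfolding w_def by metis
  then have "U w = tpow M T m y"
    using cocycle[OF w] tpow_add[OF T y, of d "m - d"] by (simp add: w_def)
  then have y': "aut_inv M U (tpow M T m y) = tpow M T (m - d) y"
    using mutually_inverse_onD(4)[OF U w] by (simp add: w_def)
  show ?case
    using tpow_minus1[OF U x, of k] tpow_minus1[OF U y, of k] m x' y' by auto
qed

end

lemma dyn_generating_cocycle_pair:
  assumes T: "aut M T" and cocycle: "full_group_cocycle M T U c" and gen: "dyn_generating M U f"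
  shows "dyn_generating M T (\<lambda>x. (f x, c x))"
proof -
  obtain X0 where X0: "X0 \<in> sets M" "emeasure M (space M - X0) = 0"
    and sep: "\<And>x y. x \<in> X0 \<Longrightarrow> y \<in> X0 \<Longrightarrow> x \<noteq> y \<Longrightarrow> \<exists>n. f (tpow M U n x) \<noteq> f (tpow M U n y)"
    using gen unfolding dyn_generating_def by blast
  have U: "aut M U" and "AE x in M. U x = tpow M T (c x) x"
    using cocycle unfolding full_group_cocycle_def by auto
  with AE_in_conull_set[OF X0] have AE: "AE x in M. U x = tpow M T (c x) x \<and> x \<in> X0"
    by (intro eventually_conj)
  obtain G where G: "G \<in> sets M" "emeasure M (space M - G) = 0"
    and GP: "\<And>x. x \<in> G \<Longrightarrow> U x = tpow M T (c x) x \<and> x \<in> X0"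
    and inv: "\<And>S. S \<in> {T, U} \<Longrightarrow> mutually_inverse_on G S (aut_inv M S)"
    by (rule aut_conull_invariant_set[of "{T, U}", OF _ _ AE]) (use T U in auto)
  have invT: "mutually_inverse_on G T (aut_inv M T)" and invU: "mutually_inverse_on G U (aut_inv M U)"
    using inv by auto
  have "x = y" if x: "x \<in> G" and y: "y \<in> G"
    and same: "\<And>n. (f (tpow M T n x), c (tpow M T n x)) = (f (tpow M T n y), c (tpow M T n y))"
    for x y
  proof (rule ccontr)
    assume "x \<noteq> y"
    then obtain k where k: "f (tpow M U k x) \<noteq> f (tpow M U k y)"
      using sep GP x y by blast
    obtain m where "tpow M U k x = tpow M T m x" "tpow M U k y = tpow M T m y"
      using cocycle_powers_synchronised[OF invT invU _ x y] GP same by blast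
    then show False
      using k same[of m] by simp
  qed
  then show ?thesis
    unfolding dyn_generating_def using G by blast
qed

section \<open>Shannon entropy of a joint labelling\<close>

lemma nn_integral_measure_preimages:
  fixes g :: "'a \<Rightarrow> 'b::countable"
  assumes "finite_measure M" "g \<in> M \<rightarrow>\<^sub>M count_space UNIV" "A \<in> sets M"
  shows "(\<integral>\<^sup>+ j. ennreal (measure M (g -` {j} \<inter> A)) \<partial>count_space UNIV) = ennreal (measure M A)"
proof -
  have "g -` {j} \<inter> A = (g -` {j} \<inter> space M) \<inter> A" for j
    using sets.sets_into_space[OF assms(3)] by blast
  then have sets: "g -` {j} \<inter> A \<in> sets M" for j
    using assms(2,3) by (auto simp: measurable_sets)
  have "emeasure M (\<Union>j. g -` {j} \<inter> A) = (\<integral>\<^sup>+ j. emeasure M (g -` {j} \<inter> A) \<partial>count_space UNIV)"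
    by (rule emeasure_UN_countable) (auto simp: sets disjoint_family_on_def)
  moreover have "(\<Union>j. g -` {j} \<inter> A) = A"
    by blast
  ultimately show ?thesis
    using finite_measure.emeasure_eq_measure[OF assms(1)] by simp
qed

lemma nn_integral_scale_ennreal:
  assumes "\<And>j. 0 \<le> r j" "(\<integral>\<^sup>+ j. ennreal (r j) \<partial>count_space UNIV) = ennreal p" "0 \<le> w" "0 \<le> p"
  shows "(\<integral>\<^sup>+ j. ennreal (r j * w) \<partial>count_space UNIV) = ennreal (p * w)"
proof -
  have "(\<integral>\<^sup>+ j. ennreal (r j * w) \<partial>count_space UNIV) = (\<integral>\<^sup>+ j. ennreal w * ennreal (r j) \<partial>count_space UNIV)"
    using assms(1,3) by (intro nn_integral_cong) (simp add: ennreal_mult mult.commute)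
  also have "\<dots> = ennreal (p * w)"
    using assms(2-4) by (simp add: nn_integral_cmult ennreal_mult mult.commute)
  finally show ?thesis .
qed

text \<open>
  This is \<open>ln x \<le> x - 1\<close> at \<open>x = p q / r\<close>; summed over a joint distribution, the term \<open>p q\<close>
  contributes the constant \<open>1\<close> in \<open>shannon_entropy_pair_le\<close>.
\<close>
lemma neg_mult_ln_le_split:
  fixes r p q :: real
  assumes "0 \<le> r" "r \<le> p" "p \<le> 1" "r \<le> q" "q \<le> 1"
  shows "ennreal (- r * ln r) \<le> ennreal (r * - ln p) + ennreal (r * - ln q) + ennreal (q * p)"
proof (cases "r = 0")
  case False
  then have r: "0 < r" and p: "0 < p" and q: "0 < q"
    using assms by auto
  have "ln (p * q / r) \<le> p * q / r - 1"
    using p q r by (intro ln_le_minus_one) auto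
  moreover have "ln (p * q / r) = ln p + ln q - ln r"
    using p q r by (simp add: ln_div ln_mult)
  ultimately have "r * (ln p + ln q - ln r) \<le> r * (p * q / r - 1)"
    using r by (intro mult_left_mono) auto
  also have "\<dots> = p * q - r"
    using r by (simp add: field_simps)
  finally have "- r * ln r \<le> r * - ln p + r * - ln q + q * p"
    using r by (simp add: algebra_simps)
  moreover have "0 \<le> r * - ln p" "0 \<le> r * - ln q" "0 \<le> q * p"
    using r p q assms by (auto intro!: mult_nonneg_nonpos)
  ultimately show ?thesis
    by (simp add: ennreal_plus[symmetric] del: ennreal_plus)
qed simp

lemma joint_entropy_le_marginals:
  fixes r :: "'i \<Rightarrow> 'j \<Rightarrow> real"
  assumes r: "\<And>i j. 0 \<le> r i j" "\<And>i j. r i j \<le> p i" "\<And>i j. r i j \<le> q j"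
    and le1: "\<And>i. p i \<le> 1" "\<And>j. q j \<le> 1"
    and sum_r_p: "\<And>i. (\<integral>\<^sup>+ j. ennreal (r i j) \<partial>count_space UNIV) = ennreal (p i)"
    and sum_r_q: "\<And>j. (\<integral>\<^sup>+ i. ennreal (r i j) \<partial>count_space UNIV) = ennreal (q j)"
    and sum_q: "(\<integral>\<^sup>+ j. ennreal (q j) \<partial>count_space UNIV) = 1"
  shows "(\<integral>\<^sup>+ i. \<integral>\<^sup>+ j. ennreal (- r i j * ln (r i j)) \<partial>count_space UNIV \<partial>count_space UNIV)
    \<le> (\<integral>\<^sup>+ i. ennreal (- p i * ln (p i)) \<partial>count_space UNIV)
      + (\<integral>\<^sup>+ j. ennreal (- q j * ln (q j)) \<partial>count_space UNIV) + (\<integral>\<^sup>+ i. ennreal (p i) \<partial>count_space UNIV)"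
proof -
  have p: "0 \<le> p i" and q: "0 \<le> q j" for i j
    using r order_trans by blast+
  have "- ln x \<ge> 0" if "0 \<le> x" "x \<le> 1" for x :: real
    using that ln_le_zero_iff[of x] by (cases "x = 0") auto
  then have ln_p: "- ln (p i) \<ge> 0" and ln_q: "- ln (q j) \<ge> 0" for i j
    using p q le1 by auto
  have "(\<integral>\<^sup>+ i. \<integral>\<^sup>+ j. ennreal (- r i j * ln (r i j)) \<partial>count_space UNIV \<partial>count_space UNIV)
      \<le> (\<integral>\<^sup>+ i. \<integral>\<^sup>+ j. ennreal (r i j * - ln (p i)) + ennreal (r i j * - ln (q j))
      + ennreal (q j * p i) \<partial>count_space UNIV \<partial>count_space UNIV)"
    using r le1 by (intro nn_integral_mono neg_mult_ln_le_split) auto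
  also have "\<dots> = (\<integral>\<^sup>+ i. \<integral>\<^sup>+ j. ennreal (r i j * - ln (p i)) \<partial>count_space UNIV \<partial>count_space UNIV)
      + (\<integral>\<^sup>+ i. \<integral>\<^sup>+ j. ennreal (r i j * - ln (q j)) \<partial>count_space UNIV \<partial>count_space UNIV)
      + (\<integral>\<^sup>+ i. \<integral>\<^sup>+ j. ennreal (q j * p i) \<partial>count_space UNIV \<partial>count_space UNIV)"
    by (simp add: nn_integral_add)
  also have "(\<integral>\<^sup>+ i. \<integral>\<^sup>+ j. ennreal (r i j * - ln (p i)) \<partial>count_space UNIV \<partial>count_space UNIV)
      = (\<integral>\<^sup>+ i. ennreal (p i * - ln (p i)) \<partial>count_space UNIV)"
    using sum_r_p ln_p r(1) p by (intro nn_integral_cong nn_integral_scale_ennreal) auto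
  also have "(\<integral>\<^sup>+ i. \<integral>\<^sup>+ j. ennreal (r i j * - ln (q j)) \<partial>count_space UNIV \<partial>count_space UNIV)
      = (\<integral>\<^sup>+ j. \<integral>\<^sup>+ i. ennreal (r i j * - ln (q j)) \<partial>count_space UNIV \<partial>count_space UNIV)"
    using nn_integral_fst_count_space[of "\<lambda>ij. ennreal (r (fst ij) (snd ij) * - ln (q (snd ij)))"]
      nn_integral_snd_count_space[of "\<lambda>ij. ennreal (r (fst ij) (snd ij) * - ln (q (snd ij)))"]
    by simp
  also have "\<dots> = (\<integral>\<^sup>+ j. ennreal (q j * - ln (q j)) \<partial>count_space UNIV)"
    using sum_r_q ln_q r(1) q by (intro nn_integral_cong nn_integral_scale_ennreal) auto
  also have "(\<integral>\<^sup>+ i. \<integral>\<^sup>+ j. ennreal (q j * p i) \<partial>count_space UNIV \<partial>count_space UNIV)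
      = (\<integral>\<^sup>+ i. ennreal (1 * p i) \<partial>count_space UNIV)"
    using sum_q p q by (intro nn_integral_cong nn_integral_scale_ennreal) auto
  finally show ?thesis
    by simp
qed

lemma shannon_entropy_pair_le:
  fixes f :: "'a \<Rightarrow> 'b::countable" and c :: "'a \<Rightarrow> 'c::countable"
  assumes "prob_space M" and f: "f \<in> M \<rightarrow>\<^sub>M count_space UNIV" and c: "c \<in> M \<rightarrow>\<^sub>M count_space UNIV"
  shows "shannon_entropy M (\<lambda>x. (f x, c x)) \<le> shannon_entropy M f + shannon_entropy M c + 1"
proof -
  interpret prob_space M by fact
  define p where "p i = measure M (f -` {i} \<inter> space M)" for i
  define q where "q j = measure M (c -` {j} \<inter> space M)" for j
  define r where "r i j = measure M ((\<lambda>x. (f x, c x)) -` {(i, j)} \<inter> space M)" for i j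
  have r_p: "r i j = measure M (c -` {j} \<inter> (f -` {i} \<inter> space M))"
    and r_q: "r i j = measure M (f -` {i} \<inter> (c -` {j} \<inter> space M))" for i j
    unfolding r_def by (auto intro: arg_cong[where f = "measure M"])
  have f_sets: "f -` {i} \<inter> space M \<in> sets M" and c_sets: "c -` {j} \<inter> space M \<in> sets M" for i j
    using f c by (simp_all add: measurable_sets)
  have sum_p: "(\<integral>\<^sup>+ i. ennreal (p i) \<partial>count_space UNIV) = 1"
    using nn_integral_measure_preimages[OF finite_measure f sets.top] by (simp add: p_def prob_space)
  have "(\<integral>\<^sup>+ i. \<integral>\<^sup>+ j. ennreal (- r i j * ln (r i j)) \<partial>count_space UNIV \<partial>count_space UNIV)
    \<le> (\<integral>\<^sup>+ i. ennreal (- p i * ln (p i)) \<partial>count_space UNIV)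
      + (\<integral>\<^sup>+ j. ennreal (- q j * ln (q j)) \<partial>count_space UNIV) + (\<integral>\<^sup>+ i. ennreal (p i) \<partial>count_space UNIV)"
  proof (rule joint_entropy_le_marginals)
    show "r i j \<le> p i" "r i j \<le> q j" for i j
      unfolding r_p r_q p_def q_def using f_sets c_sets by (auto intro: finite_measure_mono)
    show "(\<integral>\<^sup>+ j. ennreal (r i j) \<partial>count_space UNIV) = ennreal (p i)" for i
      unfolding r_p p_def by (rule nn_integral_measure_preimages[OF finite_measure c f_sets])
    show "(\<integral>\<^sup>+ i. ennreal (r i j) \<partial>count_space UNIV) = ennreal (q j)" for j
      unfolding r_q q_def by (rule nn_integral_measure_preimages[OF finite_measure f c_sets])
    show "(\<integral>\<^sup>+ j. ennreal (q j) \<partial>count_space UNIV) = 1"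
      using nn_integral_measure_preimages[OF finite_measure c sets.top] by (simp add: q_def prob_space)
  qed (simp_all add: r_def p_def q_def prob_le_1)
  moreover have "shannon_entropy M (\<lambda>x. (f x, c x))
      = (\<integral>\<^sup>+ i. \<integral>\<^sup>+ j. ennreal (- r i j * ln (r i j)) \<partial>count_space UNIV \<partial>count_space UNIV)"
    using nn_integral_fst_count_space[of "\<lambda>ij. ennreal (- r (fst ij) (snd ij) * ln (r (fst ij) (snd ij)))"]
    unfolding shannon_entropy_def r_def by simp
  ultimately show ?thesis
    using sum_p by (simp add: shannon_entropy_def p_def q_def)
qed

lemma shannon_entropy_inj_comp:
  assumes "inj h"
  shows "shannon_entropy M (h \<circ> g) = shannon_entropy M g"
proof -
  define F where "F k = ennreal (- measure M ((h \<circ> g) -` {k} \<inter> space M)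
      * ln (measure M ((h \<circ> g) -` {k} \<inter> space M)))" for k
  have "F k = 0" if "k \<notin> range h" for k
  proof -
    have "(h \<circ> g) -` {k} \<inter> space M = {}"
      using that by auto
    then show ?thesis
      by (simp add: F_def)
  qed
  then have "shannon_entropy M (h \<circ> g) = (\<integral>\<^sup>+ k. F k * indicator (range h) k \<partial>count_space UNIV)"
    unfolding shannon_entropy_def F_def[symmetric] by (intro nn_integral_cong) (auto split: split_indicator)
  also have "\<dots> = (\<integral>\<^sup>+ k. F k \<partial>count_space (range h))"
    by (rule nn_integral_count_space_indicator[symmetric]) simp
  also have "\<dots> = (\<integral>\<^sup>+ b. F (h b) \<partial>count_space UNIV)"
    by (rule nn_integral_bij_count_space[symmetric]) (rule bij_betw_imageI[OF assms refl])
  also have "\<dots> = shannon_entropy M g"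
  proof -
    have "h -` {h b} = {b}" for b
      using assms by (auto simp: inj_eq)
    then show ?thesis
      by (simp add: shannon_entropy_def F_def vimage_comp[symmetric])
  qed
  finally show ?thesis .
qed

section \<open>Finite dynamical entropy along the full group and Shannon orbit equivalence\<close>

lemma dyn_generating_inj_comp:
  assumes "inj h" "dyn_generating M T g"
  shows "dyn_generating M T (h \<circ> g)"
  using assms unfolding dyn_generating_def by (simp add: inj_eq)

lemma dyn_entropy_finite_full_group:
  assumes "prob_space M" and T: "aut M T" and cocycle: "full_group_cocycle M T U c"
    and "shannon_entropy M c < \<infinity>" and "dyn_entropy M U < \<infinity>"
  shows "dyn_entropy M T < \<infinity>"
proof -
  obtain f :: "'a \<Rightarrow> nat" where f: "f \<in> M \<rightarrow>\<^sub>M count_space UNIV" "dyn_generating M U f"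
    "shannon_entropy M f < \<infinity>"
    using assms(5) dyn_entropy_less_top_iff by blast
  have c: "c \<in> M \<rightarrow>\<^sub>M count_space UNIV"
    using cocycle unfolding full_group_cocycle_def by blast
  define h where "h = to_nat \<circ> (\<lambda>x. (f x, c x))"
  have "(\<lambda>x. (f x, c x)) \<in> M \<rightarrow>\<^sub>M count_space UNIV"
    using measurable_Pair[OF f(1) c] by (simp add: pair_measure_countable)
  then have "h \<in> M \<rightarrow>\<^sub>M count_space UNIV"
    unfolding h_def by simp
  moreover have "dyn_generating M T h"
    unfolding h_def by (intro dyn_generating_inj_comp inj_to_nat dyn_generating_cocycle_pair[OF T cocycle f(2)])
  moreover have "shannon_entropy M h \<le> shannon_entropy M f + shannon_entropy M c + 1"
    unfolding h_def shannon_entropy_inj_comp[OF inj_to_nat] by (rule shannon_entropy_pair_le[OF assms(1) f(1) c])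
  then have "shannon_entropy M h < \<infinity>"
    using f(3) assms(4) by (simp add: ennreal_add_less_top order_le_less_trans)
  ultimately show ?thesis
    using dyn_entropy_less_top_iff by blast
qed

lemma dyn_entropy_finite_iff_shannon_oe:
  assumes M: "prob_space M" and T1: "aut M T1" and T2: "aut M T2" and oe: "shannon_oe M T1 T2"
  shows "dyn_entropy M T1 < \<infinity> \<longleftrightarrow> dyn_entropy M T2 < \<infinity>"
proof -
  obtain S where S: "aut M S"
    and c: "\<exists>c. full_group_cocycle M T2 (S \<circ> T1 \<circ> aut_inv M S) c \<and> shannon_entropy M c < \<infinity>"
    and d: "\<exists>d. full_group_cocycle M (S \<circ> T1 \<circ> aut_inv M S) T2 d \<and> shannon_entropy M d < \<infinity>"
    using oe unfolding shannon_oe_def Let_def by blast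
  define S' where "S' = aut_inv M S"
  define T1' where "T1' = S \<circ> T1 \<circ> S'"
  have T1': "aut M T1'"
    using c unfolding T1'_def S'_def full_group_cocycle_def by blast
  have S'S: "AE x in M. S' (S x) = x"
    using aut_inv(2)[OF S] by (simp add: S'_def)
  have S_conj: "AE x in M. S (T1 x) = T1' (S x)"
    using S'S by eventually_elim (simp add: T1'_def)
  have "AE x in M. S' (S (T1 x)) = T1 x"
    using aut_measure_preserving[OF T1] S'S by (rule AE_measure_preserving)
  then have "AE x in M. S' (S (T1 (S' x))) = T1 (S' x)"
    by (rule AE_measure_preserving[OF aut_inv(1)[OF S, folded S'_def], where P = "\<lambda>x. S' (S (T1 x)) = T1 x"])
  then have S'_conj: "AE x in M. S' (T1' x) = T1 (S' x)"
    by eventually_elim (simp add: T1'_def)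
  have "dyn_entropy M T1 < \<infinity> \<longleftrightarrow> dyn_entropy M T1' < \<infinity>"
    using dyn_entropy_finite_conjugate[OF T1 T1' S S_conj]
      dyn_entropy_finite_conjugate[OF T1' T1 aut_aut_inv[OF S, folded S'_def] S'_conj] by blast
  also have "\<dots> \<longleftrightarrow> dyn_entropy M T2 < \<infinity>"
    using c d dyn_entropy_finite_full_group[OF M T2] dyn_entropy_finite_full_group[OF M T1']
    unfolding T1'_def S'_def by blast
  finally show ?thesis .
qed

lemma prob_space_stdX: "prob_space stdX"
proof
  have "space stdX = {0..1}"
    unfolding stdX_def by (simp add: space_restrict_space)
  then show "emeasure stdX (space stdX) = 1"
    unfolding stdX_def by (simp add: emeasure_restrict_space)
qed

theorem mainTheorem6:
  shows "(\<forall>T U c. aperiodic stdX T \<and> dyn_entropy stdX T = \<infinity> \<and>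
            full_group_cocycle stdX T U c \<and> shannon_entropy stdX c < \<infinity>
            \<longrightarrow> dyn_entropy stdX U = \<infinity>)
       \<and> (\<forall>T1 T2. aperiodic stdX T1 \<and> aperiodic stdX T2 \<and> shannon_oe stdX T1 T2
            \<longrightarrow> (dyn_entropy stdX T1 < \<infinity> \<longleftrightarrow> dyn_entropy stdX T2 < \<infinity>))"
proof (intro conjI allI impI)
  fix T U c
  assume "aperiodic stdX T \<and> dyn_entropy stdX T = \<infinity> \<and>
    full_group_cocycle stdX T U c \<and> shannon_entropy stdX c < \<infinity>"
  then show "dyn_entropy stdX U = \<infinity>"
    using dyn_entropy_finite_full_group[OF prob_space_stdX, of T U c]
    by (auto simp: aperiodic_def less_top[symmetric])
next
  fix T1 T2
  assume "aperiodic stdX T1 \<and> aperiodic stdX T2 \<and> shannon_oe stdX T1 T2"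
  then show "dyn_entropy stdX T1 < \<infinity> \<longleftrightarrow> dyn_entropy stdX T2 < \<infinity>"
    using dyn_entropy_finite_iff_shannon_oe[OF prob_space_stdX] by (auto simp: aperiodic_def)
qed

end
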